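(* Let $h$ be a positive integer and let $0<\beta<1$ be a real. There is a positive real $\alpha$ depending on $h$ and $\beta$ such that the following holds. Let $G$ be any graph on $n$ vertices and let $p=\frac{2e(G)}{n^2}$. For $i,j\in[h]$ let $\mathcal{A}_{i,j}$ denote the set of $i$-good sequences of length $j$ relative to $(\alpha,\beta,h,1)$ in $V(G)$. Then for all $i,j\in[h]$, \[\sum_{S\in\mathcal{A}_{i,j}}|N(S)|\geq(1-\beta)\,n^{j+1}p^j.\] In particular, there exists an $i$-good sequence $S$ of length $j$ such that $|N(S)|\ge(1-\beta)p^j n$.
   Context: All graphs are finite and simple. A sequence in a set $W$ is a finite sequence of elements of $W$ (repetitions allowed); its length $|S|$ counts multiplicity; $W^k$ denotes the set of sequences of length $k$ in $W$. For a sequence $S$ in $V(G)$, $N(S)$ is the set of vertices adjacent to every vertex of $S$. Goodness relative to $(\alpha,\beta,h,1)$, with $p=2e(G)/n^2$: a sequence $T$ in $V(G)$ is $0$-good if $|N(T)|\ge\alpha p^{|T|}n$; for $1\le i\le h$, a sequence $S$ in $V(G)$ of length at most $h$ is $i$-good if $S$ is $0$-good and for each $|S|\le k\le h$, the number of $(i-1)$-good sequences in $N(S)^k$ is at least $(1-\beta)|N(S)|^k$. *)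

theory Defs
  imports Main "HOL.Real"
begin

definition simple_graph :: "nat set \<Rightarrow> (nat \<Rightarrow> nat \<Rightarrow> bool) \<Rightarrow> bool" where
  "simple_graph V E \<longleftrightarrow> finite V \<and> (\<forall>u v. E u v \<longrightarrow> u \<in> V \<and> v \<in> V)
      \<and> (\<forall>u v. E u v \<longrightarrow> E v u) \<and> (\<forall>u. \<not> E u u)"

definition num_edges :: "nat set \<Rightarrow> (nat \<Rightarrow> nat \<Rightarrow> bool) \<Rightarrow> nat" where
  "num_edges V E = card {{u, v} | u v. u \<in> V \<and> v \<in> V \<and> E u v}"

definition density :: "nat set \<Rightarrow> (nat \<Rightarrow> nat \<Rightarrow> bool) \<Rightarrow> real" where
  "density V E = 2 * real (num_edges V E) / (real (card V))^2"

definition nbhd :: "nat set \<Rightarrow> (nat \<Rightarrow> nat \<Rightarrow> bool) \<Rightarrow> nat list \<Rightarrow> nat set" where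
  "nbhd V E S = {v \<in> V. \<forall>u \<in> set S. E u v}"

fun good :: "real \<Rightarrow> real \<Rightarrow> nat \<Rightarrow> nat set \<Rightarrow> (nat \<Rightarrow> nat \<Rightarrow> bool) \<Rightarrow> nat \<Rightarrow> nat list \<Rightarrow> bool" where
  "good \<alpha> \<beta> h V E 0 T \<longleftrightarrow>
     set T \<subseteq> V \<and>
     real (card (nbhd V E T)) \<ge> \<alpha> * density V E ^ length T * real (card V)"
| "good \<alpha> \<beta> h V E (Suc i) S \<longleftrightarrow>
     set S \<subseteq> V \<and> length S \<le> h \<and> good \<alpha> \<beta> h V E 0 S \<and>
     (\<forall>k. length S \<le> k \<and> k \<le> h \<longrightarrow>
        real (card {T. length T = k \<and> set T \<subseteq> nbhd V E S \<and> good \<alpha> \<beta> h V E i T})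
          \<ge> (1 - \<beta>) * real (card (nbhd V E S)) ^ k)"

definition good_seqs :: "real \<Rightarrow> real \<Rightarrow> nat \<Rightarrow> nat set \<Rightarrow> (nat \<Rightarrow> nat \<Rightarrow> bool) \<Rightarrow> nat \<Rightarrow> nat \<Rightarrow> nat list set" where
  "good_seqs \<alpha> \<beta> h V E i j = {S. length S = j \<and> set S \<subseteq> V \<and> good \<alpha> \<beta> h V E i S}"

end

(*
  Call a sequence i-bad if it is not i-good. The heart of the argument bounds all moments of
  the neighbourhood sizes of bad sequences: for 1 <= m <= k <= h,
    sum over i-bad T of length k of |N(T)|^m  <=  D_i * n^(k+m) * p^(k*m).
  For i = 0 this holds with D_0 = alpha, since 0-bad sequences have small neighbourhoods.
  An (i+1)-bad S of length j either has a small neighbourhood, or, for some j <= k <= h, more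
  than a beta-fraction of N(S)^k consists of i-bad sequences. Double counting the pairs (S, T)
  with T inside N(S) turns the number of such T, summed over S in V^j, into the j-th moment of
  the i-bad sequences of length k; this gives D_(i+1) = alpha + gamma + h * D_i / (beta * gamma^h)
  for any 0 < gamma <= 1. Taking alpha small enough makes D_i <= beta for all i <= h, so with
  m = 1 the bad sequences carry at most beta * n^(j+1) * p^j of the total
  sum over S in V^j of |N(S)| = sum over v of deg(v)^j, which is at least n^(j+1) * p^j by the
  power mean inequality and the handshake lemma.
*)

theory Submission
  imports Defs "HOL-Analysis.Convex"
begin

lemma convex_on_nonneg_power: "convex_on {0::real..} (\<lambda>x. x ^ j)"
  by (cases "even j") (auto intro: convex_on_subset convex_power_even convex_power_odd)

lemma power_sum_le_card_power_sum:
  fixes x :: "'a \<Rightarrow> real"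
  assumes "finite A" and nonneg: "\<And>a. a \<in> A \<Longrightarrow> 0 \<le> x a" and "1 \<le> j"
  shows "(\<Sum>a\<in>A. x a) ^ j \<le> real (card A) ^ (j - 1) * (\<Sum>a\<in>A. x a ^ j)"
proof (cases "A = {}")
  case True
  then show ?thesis using \<open>1 \<le> j\<close> by (simp add: zero_power)
next
  case False
  define c where "c = real (card A)"
  have c: "0 < c" using \<open>finite A\<close> False unfolding c_def by (simp add: card_gt_0_iff)
  have "((\<Sum>a\<in>A. x a) / c) ^ j = (\<Sum>a\<in>A. (1 / c) *\<^sub>R x a) ^ j"
    by (simp add: sum_divide_distrib)
  also have "\<dots> \<le> (\<Sum>a\<in>A. 1 / c * x a ^ j)"
    using \<open>finite A\<close> False nonneg unfolding c_def
    by (intro convex_on_sum[OF _ _ convex_on_nonneg_power]) auto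
  also have "\<dots> = (\<Sum>a\<in>A. x a ^ j) / c"
    by (simp add: sum_divide_distrib)
  finally have "(\<Sum>a\<in>A. x a) ^ j \<le> (\<Sum>a\<in>A. x a ^ j) / c * c ^ j"
    using c by (simp add: power_divide pos_divide_le_eq)
  also have "\<dots> = c ^ (j - 1) * (\<Sum>a\<in>A. x a ^ j)"
    using c \<open>1 \<le> j\<close> by (simp add: power_diff)
  finally show ?thesis unfolding c_def .
qed

definition seqs :: "'a set \<Rightarrow> nat \<Rightarrow> 'a list set" where
  "seqs A k = {T. length T = k \<and> set T \<subseteq> A}"

lemma finite_seqs: "finite A \<Longrightarrow> finite (seqs A k)"
  unfolding seqs_def using finite_lists_length_eq[of A k] by (simp add: conj_commute)

lemma card_seqs: "finite A \<Longrightarrow> card (seqs A k) = card A ^ k"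
  unfolding seqs_def using card_lists_length_eq[of A k] by (simp add: conj_commute)

lemma seqs_one: "seqs A 1 = (\<lambda>v. [v]) ` A"
  unfolding seqs_def by (auto simp: length_Suc_conv)

lemma nbhd_subset: "nbhd V E S \<subseteq> V"
  unfolding nbhd_def by auto

lemma finite_nbhd: "simple_graph V E \<Longrightarrow> finite (nbhd V E S)"
  unfolding simple_graph_def using nbhd_subset finite_subset by metis

lemma two_num_edges_le_sum_degree:
  assumes G: "simple_graph V E"
  shows "2 * num_edges V E \<le> (\<Sum>v\<in>V. card (nbhd V E [v]))"
proof -
  define arcs where "arcs = (SIGMA u:V. nbhd V E [u])"
  define up_arcs where "up_arcs = {(u, v) \<in> arcs. u < v}"
  have arcs: "(u, v) \<in> arcs \<longleftrightarrow> u \<in> V \<and> v \<in> V \<and> E u v" for u v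
    unfolding arcs_def nbhd_def by auto
  have "finite arcs"
    unfolding arcs_def using G finite_nbhd by (auto simp: simple_graph_def)
  then have "finite up_arcs"
    unfolding up_arcs_def by (rule rev_finite_subset) auto
  have "{{u, v} | u v. u \<in> V \<and> v \<in> V \<and> E u v} = (\<lambda>(u, v). {u, v}) ` up_arcs"
  proof (intro equalityI subsetI)
    fix e assume "e \<in> {{u, v} | u v. u \<in> V \<and> v \<in> V \<and> E u v}"
    then obtain u v where "e = {u, v}" "u \<in> V" "v \<in> V" "E u v" by blast
    moreover have "u \<noteq> v" "E v u" using G \<open>E u v\<close> by (auto simp: simple_graph_def)
    ultimately show "e \<in> (\<lambda>(u, v). {u, v}) ` up_arcs"
      unfolding up_arcs_def arcs
      by (cases "u < v") (auto intro: image_eqI[of _ _ "(u, v)"] image_eqI[of _ _ "(v, u)"])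
  qed (auto simp: up_arcs_def arcs)
  then have "num_edges V E \<le> card up_arcs"
    unfolding num_edges_def using \<open>finite up_arcs\<close> by (simp add: card_image_le)
  moreover have "2 * card up_arcs \<le> card arcs"
  proof -
    have disjoint: "up_arcs \<inter> prod.swap ` up_arcs = {}"
      by (auto simp: up_arcs_def)
    have "2 * card up_arcs = card (up_arcs \<union> prod.swap ` up_arcs)"
      using card_Un_disjoint[OF \<open>finite up_arcs\<close> finite_imageI[OF \<open>finite up_arcs\<close>] disjoint]
      by (simp add: card_image)
    also have "\<dots> \<le> card arcs"
      using G \<open>finite arcs\<close> by (intro card_mono) (auto simp: up_arcs_def arcs simple_graph_def)
    finally show ?thesis .
  qed
  moreover have "card arcs = (\<Sum>v\<in>V. card (nbhd V E [v]))"
    unfolding arcs_def using G finite_nbhd by (simp add: card_SigmaI simple_graph_def)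
  ultimately show ?thesis by linarith
qed

lemma seqs_nbhd_containing_eq:
  assumes G: "simple_graph V E" and "set T \<subseteq> V"
  shows "{S \<in> seqs V j. set T \<subseteq> nbhd V E S} = seqs (nbhd V E T) j"
  using assms unfolding seqs_def nbhd_def simple_graph_def by auto

lemma sum_card_seqs_in_nbhd:
  assumes G: "simple_graph V E" and "\<T> \<subseteq> seqs V k"
  shows "(\<Sum>S\<in>seqs V j. real (card {T \<in> \<T>. set T \<subseteq> nbhd V E S}))
    = (\<Sum>T\<in>\<T>. real (card (nbhd V E T)) ^ j)"
proof -
  have "finite V" using G by (simp add: simple_graph_def)
  then have "finite \<T>" using assms(2) finite_seqs finite_subset by blast
  have count: "real (card {x \<in> A. P x}) = (\<Sum>x\<in>A. if P x then 1 else 0)" if "finite A" for A P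
    using that by (simp add: sum.inter_filter[symmetric])
  have "(\<Sum>S\<in>seqs V j. real (card {T \<in> \<T>. set T \<subseteq> nbhd V E S}))
      = (\<Sum>S\<in>seqs V j. \<Sum>T\<in>\<T>. if set T \<subseteq> nbhd V E S then 1 else 0)"
    using \<open>finite \<T>\<close> by (simp add: count)
  also have "\<dots> = (\<Sum>T\<in>\<T>. \<Sum>S\<in>seqs V j. if set T \<subseteq> nbhd V E S then 1 else 0)"
    by (rule sum.swap)
  also have "\<dots> = (\<Sum>T\<in>\<T>. real (card {S \<in> seqs V j. set T \<subseteq> nbhd V E S}))"
    by (simp add: count[OF finite_seqs[OF \<open>finite V\<close>]])
  also have "\<dots> = (\<Sum>T\<in>\<T>. real (card (nbhd V E T)) ^ j)"
  proof (intro sum.cong refl)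
    fix T assume "T \<in> \<T>"
    then have "set T \<subseteq> V" using assms(2) by (auto simp: seqs_def)
    then show "real (card {S \<in> seqs V j. set T \<subseteq> nbhd V E S}) = real (card (nbhd V E T)) ^ j"
      using G by (simp add: seqs_nbhd_containing_eq card_seqs finite_nbhd)
  qed
  finally show ?thesis .
qed

lemma sum_card_nbhd_eq_sum_degree_power:
  assumes G: "simple_graph V E"
  shows "(\<Sum>S\<in>seqs V j. real (card (nbhd V E S))) = (\<Sum>v\<in>V. real (card (nbhd V E [v])) ^ j)"
proof -
  have "card {T \<in> seqs V 1. set T \<subseteq> nbhd V E S} = card (nbhd V E S)" for S
  proof -
    have "{T \<in> seqs V 1. set T \<subseteq> nbhd V E S} = seqs (nbhd V E S) 1"
      using nbhd_subset unfolding seqs_def by blast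
    then show ?thesis using G by (simp add: card_seqs finite_nbhd)
  qed
  then have "(\<Sum>S\<in>seqs V j. real (card (nbhd V E S))) = (\<Sum>T\<in>seqs V 1. real (card (nbhd V E T)) ^ j)"
    using sum_card_seqs_in_nbhd[OF G, where \<T>="seqs V 1" and k=1 and j=j] by simp
  also have "\<dots> = (\<Sum>v\<in>V. real (card (nbhd V E [v])) ^ j)"
    unfolding seqs_one by (subst sum.reindex) (auto simp: inj_on_def)
  finally show ?thesis .
qed

lemma sum_card_nbhd_ge:
  assumes G: "simple_graph V E" and "1 \<le> j"
  shows "real (card V) ^ (j + 1) * density V E ^ j \<le> (\<Sum>S\<in>seqs V j. real (card (nbhd V E S)))"
proof (cases "V = {}")
  case True
  then show ?thesis by (simp add: sum_nonneg)
next
  case False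
  define n where "n = real (card V)"
  define d where "d v = real (card (nbhd V E [v]))" for v
  have "finite V" using G by (simp add: simple_graph_def)
  then have n: "0 < n" using False unfolding n_def by (simp add: card_gt_0_iff)
  have "density V E * n ^ 2 = 2 * real (num_edges V E)"
    using n unfolding density_def n_def by simp
  also have "\<dots> \<le> (\<Sum>v\<in>V. d v)"
    unfolding d_def using two_num_edges_le_sum_degree[OF G] by (metis of_nat_le_iff of_nat_mult of_nat_numeral of_nat_sum)
  finally have "(density V E * n ^ 2) ^ j \<le> (\<Sum>v\<in>V. d v) ^ j"
    using n by (intro power_mono) (auto simp: density_def)
  also have "\<dots> \<le> n ^ (j - 1) * (\<Sum>v\<in>V. d v ^ j)"
    unfolding n_def d_def using \<open>finite V\<close> \<open>1 \<le> j\<close> by (intro power_sum_le_card_power_sum) auto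
  also have "(density V E * n ^ 2) ^ j = n ^ (j - 1) * (n ^ (j + 1) * density V E ^ j)"
  proof -
    have "2 * j = (j - 1) + (j + 1)" using \<open>1 \<le> j\<close> by simp
    then have "n ^ (2 * j) = n ^ (j - 1) * n ^ (j + 1)" by (simp only: power_add)
    moreover have "(density V E * n ^ 2) ^ j = density V E ^ j * n ^ (2 * j)"
      by (simp add: power_mult_distrib power_mult)
    ultimately show ?thesis by simp
  qed
  finally show ?thesis
    using n unfolding n_def d_def sum_card_nbhd_eq_sum_degree_power[OF G] by simp
qed

locale goodness_bounds =
  fixes \<alpha> \<beta> :: real and h :: nat and V :: "nat set" and E :: "nat \<Rightarrow> nat \<Rightarrow> bool"
  assumes graph: "simple_graph V E"
    and \<alpha>_pos: "0 < \<alpha>" and \<alpha>_le_1: "\<alpha> \<le> 1" and \<beta>_pos: "0 < \<beta>"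
    and density_pos: "0 < density V E"
begin

abbreviation n :: real where "n \<equiv> real (card V)"
abbreviation p :: real where "p \<equiv> density V E"

definition bad_seqs :: "nat \<Rightarrow> nat \<Rightarrow> nat list set" where
  "bad_seqs i k = {T \<in> seqs V k. \<not> good \<alpha> \<beta> h V E i T}"

definition bad_moment :: "nat \<Rightarrow> nat \<Rightarrow> nat \<Rightarrow> real" where
  "bad_moment i k m = (\<Sum>T\<in>bad_seqs i k. real (card (nbhd V E T)) ^ m)"

text \<open>The normalisation \<open>n ^ (k + m) * p ^ (k * m)\<close> is roughly the value of
  \<open>\<Sum>T\<in>seqs V k. card (nbhd V E T) ^ m\<close> in the random graph \<open>G(n, p)\<close>.\<close>
definition bad_moments_le :: "nat \<Rightarrow> real \<Rightarrow> bool" where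
  "bad_moments_le i D \<longleftrightarrow>
    (\<forall>k m. 1 \<le> m \<longrightarrow> m \<le> k \<longrightarrow> k \<le> h \<longrightarrow> bad_moment i k m \<le> D * n ^ (k + m) * p ^ (k * m))"

lemma finite_V: "finite V"
  using graph by (simp add: simple_graph_def)

lemma card_V_pos: "0 < n"
  using density_pos by (cases "card V = 0") (auto simp: density_def)

lemma bad_seqs_subset: "bad_seqs i k \<subseteq> seqs V k"
  unfolding bad_seqs_def by auto

lemma bad_moments_le_mono: "bad_moments_le i D \<Longrightarrow> D \<le> D' \<Longrightarrow> bad_moments_le i D'"
  unfolding bad_moments_le_def using density_pos
  by (meson mult_right_mono order_trans zero_le_power of_nat_0_le_iff less_imp_le)

lemma bad_moments_le_0: "bad_moments_le 0 \<alpha>"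
  unfolding bad_moments_le_def
proof (intro allI impI)
  fix k m :: nat assume "1 \<le> m" "m \<le> k" "k \<le> h"
  have each: "real (card (nbhd V E T)) ^ m \<le> \<alpha> * (n ^ m * p ^ (k * m))" if "T \<in> bad_seqs 0 k" for T
  proof -
    from that have "real (card (nbhd V E T)) \<le> \<alpha> * p ^ k * n"
      unfolding bad_seqs_def seqs_def by auto
    then have "real (card (nbhd V E T)) ^ m \<le> (\<alpha> * p ^ k * n) ^ m"
      by (intro power_mono) auto
    also have "\<dots> = \<alpha> ^ m * (n ^ m * p ^ (k * m))"
      by (simp add: power_mult_distrib power_mult mult_ac)
    also have "\<dots> \<le> \<alpha> * (n ^ m * p ^ (k * m))"
      using power_decreasing[OF \<open>1 \<le> m\<close>, of \<alpha>] \<alpha>_pos \<alpha>_le_1 density_pos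
      by (intro mult_right_mono) auto
    finally show ?thesis .
  qed
  have "card (bad_seqs 0 k) \<le> card (seqs V k)"
    using bad_seqs_subset finite_seqs[OF finite_V] by (rule card_mono[rotated])
  then have card_bad: "real (card (bad_seqs 0 k)) \<le> n ^ k"
    by (simp add: card_seqs[OF finite_V])
  have "bad_moment 0 k m \<le> real (card (bad_seqs 0 k)) * (\<alpha> * (n ^ m * p ^ (k * m)))"
    unfolding bad_moment_def using each by (rule sum_bounded_above)
  also have "\<dots> \<le> n ^ k * (\<alpha> * (n ^ m * p ^ (k * m)))"
    using card_bad \<alpha>_pos density_pos by (intro mult_right_mono) auto
  also have "\<dots> = \<alpha> * n ^ (k + m) * p ^ (k * m)"
    by (simp add: power_add)
  finally show "bad_moment 0 k m \<le> \<alpha> * n ^ (k + m) * p ^ (k * m)" .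
qed

lemma card_good_add_card_bad:
  "real (card {T. length T = k \<and> set T \<subseteq> nbhd V E S \<and> good \<alpha> \<beta> h V E i T})
    + real (card {T \<in> bad_seqs i k. set T \<subseteq> nbhd V E S}) = real (card (nbhd V E S)) ^ k"
proof -
  let ?good = "{T. length T = k \<and> set T \<subseteq> nbhd V E S \<and> good \<alpha> \<beta> h V E i T}"
  let ?bad = "{T \<in> bad_seqs i k. set T \<subseteq> nbhd V E S}"
  have split: "seqs (nbhd V E S) k = ?good \<union> ?bad"
    unfolding bad_seqs_def seqs_def using nbhd_subset[of V E S] by auto
  have "finite (seqs (nbhd V E S) k)"
    using finite_seqs finite_nbhd[OF graph] by blast
  then have "finite ?good" "finite ?bad"
    unfolding split by simp_all
  then have "card ?good + card ?bad = card (seqs (nbhd V E S) k)"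
    unfolding split by (intro card_Un_disjoint[symmetric]) (auto simp: bad_seqs_def)
  also have "\<dots> = card (nbhd V E S) ^ k"
    by (rule card_seqs[OF finite_nbhd[OF graph]])
  finally have "real (card ?good + card ?bad) = real (card (nbhd V E S) ^ k)"
    by (rule arg_cong)
  then show ?thesis
    by (simp only: of_nat_add of_nat_power)
qed

lemma bad_Suc_cases:
  assumes "S \<in> bad_seqs (Suc i) j" "j \<le> h"
  obtains "real (card (nbhd V E S)) < \<alpha> * p ^ j * n"
  | k where "j \<le> k" "k \<le> h"
      "\<beta> * real (card (nbhd V E S)) ^ k < real (card {T \<in> bad_seqs i k. set T \<subseteq> nbhd V E S})"
proof -
  have S: "length S = j" "set S \<subseteq> V" "\<not> good \<alpha> \<beta> h V E (Suc i) S"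
    using assms(1) unfolding bad_seqs_def seqs_def by blast+
  show thesis
  proof (cases "good \<alpha> \<beta> h V E 0 S")
    case True
    with S assms(2) obtain k where "j \<le> k" "k \<le> h"
      "real (card {T. length T = k \<and> set T \<subseteq> nbhd V E S \<and> good \<alpha> \<beta> h V E i T})
        < (1 - \<beta>) * real (card (nbhd V E S)) ^ k"
      by (auto simp: not_le)
    with card_good_add_card_bad[of k S i] show thesis
      using that(2) by (simp add: algebra_simps)
  next
    case False
    with S show thesis
      using that(1) by simp
  qed
qed

lemma card_nbhd_power_le_of_bad:
  assumes "S \<in> bad_seqs (Suc i) j" "j \<le> h" "m \<le> j" "0 < L"
  shows "real (card (nbhd V E S)) ^ m \<le> (\<alpha> * p ^ j * n) ^ m + L ^ m
    + (\<Sum>k=j..h. real (card {T \<in> bad_seqs i k. set T \<subseteq> nbhd V E S}) / (\<beta> * L ^ (k - m)))"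
proof -
  define c where "c = real (card (nbhd V E S))"
  define B where "B k = real (card {T \<in> bad_seqs i k. set T \<subseteq> nbhd V E S}) / (\<beta> * L ^ (k - m))" for k
  have B_nonneg: "0 \<le> B k" for k
    using \<beta>_pos \<open>0 < L\<close> by (simp add: B_def)
  have "c ^ m \<le> (\<alpha> * p ^ j * n) ^ m \<or> c ^ m \<le> L ^ m \<or> (\<exists>k\<in>{j..h}. c ^ m \<le> B k)"
  proof (cases "c \<le> L")
    case True
    then show ?thesis by (simp add: power_mono c_def)
  next
    case False
    from assms(1,2) show ?thesis
    proof (cases rule: bad_Suc_cases)
      case 1
      then show ?thesis by (simp add: power_mono c_def)
    next
      case (2 k)
      have "L ^ (k - m) * c ^ m \<le> c ^ (k - m) * c ^ m"
        using False \<open>0 < L\<close> by (intro mult_right_mono power_mono) (auto simp: c_def)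
      also have "\<dots> = c ^ k"
        using \<open>m \<le> j\<close> \<open>j \<le> k\<close> by (simp flip: power_add)
      finally have "\<beta> * (L ^ (k - m) * c ^ m) \<le> \<beta> * c ^ k"
        using \<beta>_pos by simp
      with 2(3) have "c ^ m * (\<beta> * L ^ (k - m)) \<le> real (card {T \<in> bad_seqs i k. set T \<subseteq> nbhd V E S})"
        unfolding c_def by (simp add: mult_ac)
      then have "c ^ m \<le> B k"
        using \<beta>_pos \<open>0 < L\<close> by (simp add: B_def pos_le_divide_eq)
      then show ?thesis using 2 by auto
    qed
  qed
  moreover have "B k \<le> sum B {j..h}" if "k \<in> {j..h}" for k
    using that B_nonneg by (intro member_le_sum) auto
  moreover have "0 \<le> (\<alpha> * p ^ j * n) ^ m" "0 \<le> L ^ m" "0 \<le> sum B {j..h}"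
    using \<alpha>_pos density_pos \<open>0 < L\<close> B_nonneg by (simp_all add: sum_nonneg)
  ultimately have "c ^ m \<le> (\<alpha> * p ^ j * n) ^ m + L ^ m + sum B {j..h}"
    by (smt (verit))
  then show ?thesis unfolding c_def B_def .
qed

lemma bad_moment_Suc_le:
  assumes "m \<le> j" "j \<le> h" "0 < L"
  shows "bad_moment (Suc i) j m \<le> n ^ j * (\<alpha> * p ^ j * n) ^ m + n ^ j * L ^ m
    + (\<Sum>k=j..h. bad_moment i k j / (\<beta> * L ^ (k - m)))"
proof -
  define B where "B k S = real (card {T \<in> bad_seqs i k. set T \<subseteq> nbhd V E S})" for k S
  define R where "R S = (\<alpha> * p ^ j * n) ^ m + L ^ m + (\<Sum>k=j..h. B k S / (\<beta> * L ^ (k - m)))" for S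
  have R_nonneg: "0 \<le> R S" for S
    unfolding R_def B_def using \<alpha>_pos density_pos \<beta>_pos \<open>0 < L\<close>
    by (intro add_nonneg_nonneg sum_nonneg divide_nonneg_nonneg) auto
  have double_count: "(\<Sum>S\<in>seqs V j. B k S) = bad_moment i k j" for k
    unfolding B_def bad_moment_def by (rule sum_card_seqs_in_nbhd[OF graph bad_seqs_subset])
  have "bad_moment (Suc i) j m \<le> (\<Sum>S\<in>bad_seqs (Suc i) j. R S)"
    unfolding bad_moment_def R_def B_def
    by (intro sum_mono card_nbhd_power_le_of_bad assms)
  also have "\<dots> \<le> (\<Sum>S\<in>seqs V j. R S)"
    using bad_seqs_subset R_nonneg by (intro sum_mono2 finite_seqs finite_V)
  also have "\<dots> = n ^ j * (\<alpha> * p ^ j * n) ^ m + n ^ j * L ^ m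
      + (\<Sum>k=j..h. bad_moment i k j / (\<beta> * L ^ (k - m)))"
    unfolding R_def
    by (simp add: sum.distrib card_seqs[OF finite_V] sum.swap[of _ "{j..h}"] distrib_left
        double_count flip: sum_divide_distrib)
  finally show ?thesis .
qed

lemma bad_moments_le_Suc:
  assumes bound: "bad_moments_le i D" and "0 \<le> D" "0 < \<gamma>" "\<gamma> \<le> 1"
  shows "bad_moments_le (Suc i) (\<alpha> + \<gamma> + h * (D / (\<beta> * \<gamma> ^ h)))"
  unfolding bad_moments_le_def
proof (intro allI impI)
  fix j m :: nat assume "1 \<le> m" "m \<le> j" "j \<le> h"
  define X where "X = n ^ (j + m) * p ^ (j * m)"
  define L where "L = \<gamma> * p ^ j * n"
  have "0 \<le> X" "0 < L"
    using density_pos card_V_pos \<open>0 < \<gamma>\<close> by (simp_all add: X_def L_def)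
  have scale: "n ^ j * (c * p ^ j * n) ^ m = c ^ m * X" for c
    by (simp add: X_def power_add power_mult_distrib power_mult mult_ac)
  have \<alpha>_term: "n ^ j * (\<alpha> * p ^ j * n) ^ m \<le> \<alpha> * X"
    unfolding scale using power_decreasing[OF \<open>1 \<le> m\<close>, of \<alpha>] \<alpha>_pos \<alpha>_le_1 \<open>0 \<le> X\<close>
    by (intro mult_right_mono) auto
  have \<gamma>_term: "n ^ j * L ^ m \<le> \<gamma> * X"
    unfolding L_def scale using power_decreasing[OF \<open>1 \<le> m\<close>, of \<gamma>] \<open>0 < \<gamma>\<close> \<open>\<gamma> \<le> 1\<close> \<open>0 \<le> X\<close>
    by (intro mult_right_mono) auto
  have "bad_moment i k j / (\<beta> * L ^ (k - m)) \<le> D / (\<beta> * \<gamma> ^ h) * X"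
    if "k \<in> {j..h}" for k
  proof -
    define d where "d = k - m"
    have k: "k = m + d"
      using that \<open>m \<le> j\<close> by (simp add: d_def)
    have "bad_moment i k j / (\<beta> * L ^ (k - m)) \<le> D * n ^ (k + j) * p ^ (k * j) / (\<beta> * L ^ (k - m))"
      using bound that \<open>1 \<le> m\<close> \<open>m \<le> j\<close> \<beta>_pos \<open>0 < L\<close>
      by (intro divide_right_mono) (auto simp: bad_moments_le_def)
    also have "\<dots> = D / (\<beta> * \<gamma> ^ (k - m)) * X"
      using density_pos card_V_pos \<open>0 < \<gamma>\<close> \<beta>_pos unfolding k X_def L_def
      by (simp add: power_add power_mult_distrib field_simps flip: power_mult)
    also have "\<dots> \<le> D / (\<beta> * \<gamma> ^ h) * X"
    proof -
      have "\<gamma> ^ h \<le> \<gamma> ^ (k - m)"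
        using that \<open>0 < \<gamma>\<close> \<open>\<gamma> \<le> 1\<close> by (intro power_decreasing) auto
      then have "D / (\<beta> * \<gamma> ^ (k - m)) \<le> D / (\<beta> * \<gamma> ^ h)"
        using \<open>0 \<le> D\<close> \<beta>_pos \<open>0 < \<gamma>\<close> by (intro divide_left_mono mult_left_mono) auto
      then show ?thesis
        using \<open>0 \<le> X\<close> by (rule mult_right_mono)
    qed
    finally show ?thesis .
  qed
  then have "(\<Sum>k=j..h. bad_moment i k j / (\<beta> * L ^ (k - m)))
      \<le> real (card {j..h}) * (D / (\<beta> * \<gamma> ^ h) * X)"
    by (rule sum_bounded_above)
  also have "\<dots> \<le> h * (D / (\<beta> * \<gamma> ^ h) * X)"
    using \<open>1 \<le> m\<close> \<open>m \<le> j\<close> \<open>0 \<le> D\<close> \<open>0 \<le> X\<close> \<beta>_pos \<open>0 < \<gamma>\<close>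
    by (intro mult_right_mono) auto
  finally have "(\<Sum>k=j..h. bad_moment i k j / (\<beta> * L ^ (k - m))) \<le> h * (D / (\<beta> * \<gamma> ^ h) * X)" .
  with \<alpha>_term \<gamma>_term have "bad_moment (Suc i) j m \<le> (\<alpha> + \<gamma> + h * (D / (\<beta> * \<gamma> ^ h))) * X"
    using bad_moment_Suc_le[OF \<open>m \<le> j\<close> \<open>j \<le> h\<close> \<open>0 < L\<close>, of i]
    by (simp only: distrib_right mult.assoc)
  then show "bad_moment (Suc i) j m \<le> (\<alpha> + \<gamma> + h * (D / (\<beta> * \<gamma> ^ h))) * n ^ (j + m) * p ^ (j * m)"
    by (simp add: X_def mult_ac)
qed

end

text \<open>With \<open>\<gamma> = t / 3\<close>, the step \<open>bad_moments_le_Suc\<close> turns the bound \<open>shrink h \<beta> t\<close>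
  into \<open>t\<close>; the \<open>h\<close>-fold iterate of \<open>shrink h \<beta>\<close> from \<open>\<beta>\<close> is the \<open>\<alpha>\<close> of the theorem.\<close>
definition shrink :: "nat \<Rightarrow> real \<Rightarrow> real \<Rightarrow> real" where
  "shrink h \<beta> t = \<beta> * (t / 3) ^ (h + 1) / h"

lemma shrink_pos: "0 < h \<Longrightarrow> 0 < \<beta> \<Longrightarrow> 0 < t \<Longrightarrow> 0 < shrink h \<beta> t"
  by (simp add: shrink_def)

lemma shrink_le_third:
  assumes "0 < h" "0 < \<beta>" "\<beta> \<le> 1" "0 < t" "t \<le> 1"
  shows "shrink h \<beta> t \<le> t / 3"
proof -
  have "shrink h \<beta> t \<le> \<beta> * (t / 3) ^ (h + 1)"
    using assms divide_left_mono[of 1 "real h" "\<beta> * (t / 3) ^ (h + 1)"] by (simp add: shrink_def)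
  also have "\<dots> \<le> (t / 3) ^ (h + 1)"
    using assms by (simp add: mult_le_cancel_right1)
  also have "\<dots> \<le> t / 3"
    using assms power_decreasing[of 1 "h + 1" "t / 3"] by simp
  finally show ?thesis .
qed

lemma shrink_iter_bounds:
  assumes "0 < h" "0 < \<beta>" "\<beta> \<le> 1" "0 < t" "t \<le> 1"
  shows "0 < (shrink h \<beta> ^^ k) t \<and> (shrink h \<beta> ^^ k) t \<le> t"
proof (induction k)
  case (Suc k)
  then have "0 < shrink h \<beta> ((shrink h \<beta> ^^ k) t)" "shrink h \<beta> ((shrink h \<beta> ^^ k) t) \<le> (shrink h \<beta> ^^ k) t / 3"
    using assms shrink_pos shrink_le_third by auto
  with Suc show ?case by simp
qed (use assms in simp)

lemma shrink_iter_antimono: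
  assumes "0 < h" "0 < \<beta>" "\<beta> \<le> 1" "0 < t" "t \<le> 1" "k \<le> l"
  shows "(shrink h \<beta> ^^ l) t \<le> (shrink h \<beta> ^^ k) t"
proof -
  have "0 < (shrink h \<beta> ^^ k) t" "(shrink h \<beta> ^^ k) t \<le> 1"
    using shrink_iter_bounds[OF assms(1-5)] \<open>t \<le> 1\<close> by (auto intro: order_trans)
  then have "(shrink h \<beta> ^^ (l - k)) ((shrink h \<beta> ^^ k) t) \<le> (shrink h \<beta> ^^ k) t"
    using shrink_iter_bounds[OF assms(1-3)] by blast
  then show ?thesis
    using \<open>k \<le> l\<close> by (simp flip: funpow_add[unfolded comp_def, THEN fun_cong])
qed

context goodness_bounds
begin

lemma bad_moments_le_Suc_shrink:
  assumes "0 < h" "\<beta> \<le> 1" "0 < t" "t \<le> 1" "\<alpha> \<le> shrink h \<beta> t"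
    and "bad_moments_le i (shrink h \<beta> t)"
  shows "bad_moments_le (Suc i) t"
proof -
  have "0 < shrink h \<beta> t"
    using assms \<beta>_pos by (simp add: shrink_pos)
  then have bound: "bad_moments_le (Suc i) (\<alpha> + t / 3 + h * (shrink h \<beta> t / (\<beta> * (t / 3) ^ h)))"
    using assms by (intro bad_moments_le_Suc) auto
  have third: "h * (shrink h \<beta> t / (\<beta> * (t / 3) ^ h)) = t / 3"
    using assms \<beta>_pos by (simp add: shrink_def)
  have "\<alpha> \<le> t / 3"
    using assms \<beta>_pos shrink_le_third[of h \<beta> t] by linarith
  then have "\<alpha> + t / 3 + h * (shrink h \<beta> t / (\<beta> * (t / 3) ^ h)) \<le> t"
    unfolding third by linarith
  with bound show ?thesis
    by (rule bad_moments_le_mono)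
qed

lemma bad_moments_le_shrink_iter:
  assumes "0 < h" "\<beta> \<le> 1" "\<alpha> \<le> (shrink h \<beta> ^^ h) \<beta>" "i \<le> h"
  shows "bad_moments_le i ((shrink h \<beta> ^^ (h - i)) \<beta>)"
  using \<open>i \<le> h\<close>
proof (induction i)
  case 0
  then show ?case
    using bad_moments_le_0 assms(3) by (auto elim: bad_moments_le_mono)
next
  case (Suc i)
  define t where "t = (shrink h \<beta> ^^ (h - Suc i)) \<beta>"
  have t: "0 < t" "t \<le> 1"
    using shrink_iter_bounds[OF \<open>0 < h\<close> \<beta>_pos \<open>\<beta> \<le> 1\<close> \<beta>_pos \<open>\<beta> \<le> 1\<close>] \<open>\<beta> \<le> 1\<close>
    unfolding t_def by (auto intro: order_trans)
  have "h - i = Suc (h - Suc i)"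
    using Suc.prems by simp
  then have shrink_t: "shrink h \<beta> t = (shrink h \<beta> ^^ (h - i)) \<beta>"
    by (simp add: t_def)
  have "\<alpha> \<le> shrink h \<beta> t"
    using assms(3) shrink_iter_antimono[OF \<open>0 < h\<close> \<beta>_pos \<open>\<beta> \<le> 1\<close> \<beta>_pos \<open>\<beta> \<le> 1\<close>, of "h - i" h]
    unfolding shrink_t by linarith
  moreover have "bad_moments_le i (shrink h \<beta> t)"
    using Suc by (simp add: shrink_t)
  ultimately show ?case
    unfolding t_def[symmetric] using assms(1,2) t by (intro bad_moments_le_Suc_shrink)
qed

lemma sum_good_seqs_ge:
  assumes "bad_moments_le i \<beta>" "1 \<le> j" "j \<le> h"
  shows "(1 - \<beta>) * n ^ (j + 1) * p ^ j \<le> (\<Sum>S\<in>good_seqs \<alpha> \<beta> h V E i j. real (card (nbhd V E S)))"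
proof -
  have split: "seqs V j = good_seqs \<alpha> \<beta> h V E i j \<union> bad_seqs i j"
    by (auto simp: good_seqs_def bad_seqs_def seqs_def)
  have "finite (seqs V j)"
    by (rule finite_seqs[OF finite_V])
  then have "(\<Sum>S\<in>seqs V j. real (card (nbhd V E S)))
      = (\<Sum>S\<in>good_seqs \<alpha> \<beta> h V E i j. real (card (nbhd V E S))) + bad_moment i j 1"
    unfolding split bad_moment_def
    by (subst sum.union_disjoint) (auto simp: good_seqs_def bad_seqs_def)
  moreover have "bad_moment i j 1 \<le> \<beta> * n ^ (j + 1) * p ^ (j * 1)"
    using assms unfolding bad_moments_le_def by blast
  moreover have "n ^ (j + 1) * p ^ j \<le> (\<Sum>S\<in>seqs V j. real (card (nbhd V E S)))"
    by (rule sum_card_nbhd_ge[OF graph \<open>1 \<le> j\<close>])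
  ultimately show ?thesis
    by (simp add: algebra_simps)
qed

end

theorem theorem3p3:
  fixes h :: nat and \<beta> :: real
  assumes "0 < h" and "0 < \<beta>" and "\<beta> < 1"
  shows "\<exists>\<alpha>::real. \<alpha> > 0 \<and>
    (\<forall>V E. simple_graph V E \<longrightarrow>
      (\<forall>i j. 1 \<le> i \<and> i \<le> h \<and> 1 \<le> j \<and> j \<le> h \<longrightarrow>
        (\<Sum>S\<in>good_seqs \<alpha> \<beta> h V E i j. real (card (nbhd V E S)))
          \<ge> (1 - \<beta>) * real (card V) ^ (j + 1) * density V E ^ j))"
proof -
  define \<alpha> where "\<alpha> = (shrink h \<beta> ^^ h) \<beta>"
  have iter: "0 < (shrink h \<beta> ^^ k) \<beta>" "(shrink h \<beta> ^^ k) \<beta> \<le> \<beta>" for k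
    using shrink_iter_bounds[of h \<beta> \<beta> k] assms by auto
  show ?thesis
  proof (intro exI[of _ \<alpha>] conjI allI impI)
    show "0 < \<alpha>"
      unfolding \<alpha>_def by (rule iter)
    fix V E i j
    assume G: "simple_graph V E" and ij: "1 \<le> i \<and> i \<le> h \<and> 1 \<le> j \<and> j \<le> h"
    show "(1 - \<beta>) * real (card V) ^ (j + 1) * density V E ^ j
        \<le> (\<Sum>S\<in>good_seqs \<alpha> \<beta> h V E i j. real (card (nbhd V E S)))"
    proof (cases "density V E = 0")
      case True
      then show ?thesis using ij by (simp add: sum_nonneg zero_power)
    next
      case False
      then interpret goodness_bounds \<alpha> \<beta> h V E
        using G iter[of h] assms unfolding \<alpha>_def by unfold_locales (auto simp: density_def)
      have "bad_moments_le i ((shrink h \<beta> ^^ (h - i)) \<beta>)"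
        using assms ij by (intro bad_moments_le_shrink_iter) (auto simp: \<alpha>_def)
      then have "bad_moments_le i \<beta>"
        using iter(2) by (rule bad_moments_le_mono)
      then show ?thesis
        using ij by (intro sum_good_seqs_ge) auto
    qed
  qed
qed

end
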